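(* Let $X\in L^\infty$ and let $\mathcal{G}\subseteq\mathcal{F}$ be a sub-$\sigma$-field. A random variable $Y$ belongs to $\mathbb{E}[X\mid\mathcal{G}]$ if and only if $Y\in L^\infty(\mathcal{G})$ and $|X-Y|\le\varepsilon(X,\mathcal{G})$ a.s.
   Context: $\mathbb{K}$ is a local field with non-archimedean absolute value $|\cdot|$. $(\Omega,\mathcal{F},\mathbb{P})$ is a probability space; $L^\infty$ is the space of $\mathbb{K}$-valued random variables $X$ with $\operatorname{ess\,sup}|X|<\infty$; $L^\infty(\mathcal{G})$ its $\mathcal{G}$-measurable subspace. For a non-negative real random variable $S$, $\operatorname{ess\,sup}\{S\mid\mathcal{G}\}:=\sup_{p\ge1}\mathbb{E}[S^p\mid\mathcal{G}]^{1/p}$ (usual real conditional expectation), $\|X\|_\mathcal{G}:=\operatorname{ess\,sup}\{|X|\mid\mathcal{G}\}$, and $\mathbb{E}[X\mid\mathcal{G}]:=\{Y\in L^\infty(\mathcal{G}): \|X-Y\|_\mathcal{G}\le\|X-Z\|_\mathcal{G}\text{ a.s. for all }Z\in L^\infty(\mathcal{G})\}$. This set is non-empty, and $\|X-Y\|_\mathcal{G}$ is a.s. the same for all $Y\in\mathbb{E}[X\mid\mathcal{G}]$; this common random variable is denoted $\varepsilon(X,\mathcal{G})$. *)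

theory Defs
  imports "HOL-Probability.Probability"
begin

definition local_field_abs :: "('k::{field,metric_space} \<Rightarrow> real) \<Rightarrow> bool" where
  "local_field_abs nabs \<longleftrightarrow>
     (\<forall>x. 0 \<le> nabs x) \<and> (\<forall>x. nabs x = 0 \<longleftrightarrow> x = 0) \<and>
     (\<forall>x y. nabs (x * y) = nabs x * nabs y) \<and>
     (\<forall>x y. nabs (x + y) \<le> max (nabs x) (nabs y)) \<and>
     (\<exists>x::'k. nabs x \<noteq> 0 \<and> nabs x \<noteq> 1) \<and>
     (\<forall>x y. dist x y = nabs (x - y)) \<and>
     (\<forall>x::'k. \<exists>r::real>0. compact (cball x r))"

definition Linf :: "'w measure \<Rightarrow> ('k::{field,metric_space} \<Rightarrow> real) \<Rightarrow> 'w measure \<Rightarrow> ('w \<Rightarrow> 'k) set" where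
  "Linf M nabs G = {X. X \<in> borel_measurable G \<and> (\<exists>C. AE w in M. nabs (X w) \<le> C)}"

definition ess_sup_cond :: "'w measure \<Rightarrow> 'w measure \<Rightarrow> ('w \<Rightarrow> real) \<Rightarrow> 'w \<Rightarrow> real" where
  "ess_sup_cond M G S = (\<lambda>w. SUP p\<in>{1::nat..}. (real_cond_exp M G (\<lambda>v. S v ^ p) w) powr (1 / real p))"

definition normG :: "'w measure \<Rightarrow> ('k::{field,metric_space} \<Rightarrow> real) \<Rightarrow> 'w measure \<Rightarrow> ('w \<Rightarrow> 'k) \<Rightarrow> 'w \<Rightarrow> real" where
  "normG M nabs G X = ess_sup_cond M G (\<lambda>w. nabs (X w))"

definition condE :: "'w measure \<Rightarrow> ('k::{field,metric_space} \<Rightarrow> real) \<Rightarrow> ('w \<Rightarrow> 'k) \<Rightarrow> 'w measure \<Rightarrow> ('w \<Rightarrow> 'k) set" where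
  "condE M nabs X G = {Y. Y \<in> Linf M nabs G \<and>
      (\<forall>Z \<in> Linf M nabs G. AE w in M.
         normG M nabs G (\<lambda>v. X v - Y v) w \<le> normG M nabs G (\<lambda>v. X v - Z v) w)}"

text \<open>\<open>\<epsilon>(X,G)\<close>: the common value of \<open>\<parallel>X - Y\<parallel>_G\<close> for \<open>Y \<in> E[X|G]\<close>.\<close>
definition eps_cond :: "'w measure \<Rightarrow> ('k::{field,metric_space} \<Rightarrow> real) \<Rightarrow> ('w \<Rightarrow> 'k) \<Rightarrow> 'w measure \<Rightarrow> 'w \<Rightarrow> real" where
  "eps_cond M nabs X G = normG M nabs G (\<lambda>v. X v - (SOME Y. Y \<in> condE M nabs X G) v)"

end

theory Submission
  imports Defs
begin

text \<open>The conditional norm \<open>\<parallel>X - Y\<parallel>\<^sub>G\<close> is the least \<open>G\<close>-measurable almost sure bound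
  of \<open>\<bar>X - Y\<bar>\<close> (a conditional Markov inequality for the moments). Hence, once some minimiser
  \<open>Y\<^sub>0 \<in> E[X|G]\<close> is known, \<open>\<bar>X - Y\<bar> \<le> \<epsilon>(X,G) = \<parallel>X - Y\<^sub>0\<parallel>\<^sub>G\<close> a.s. says exactly that
  \<open>\<parallel>X - Y\<parallel>\<^sub>G \<le> \<parallel>X - Y\<^sub>0\<parallel>\<^sub>G\<close> a.s., i.e. that \<open>Y\<close> is a minimiser too.

  The substance is the existence of a minimiser. Take \<open>Z\<^sub>k \<in> L\<^sup>\<infinity>(G)\<close> minimising
  \<open>E \<parallel>X - Z\<parallel>\<^sub>G\<close>. The conditional norms take values in the discrete value set \<open>|\<bbbK>|\<close>, so
  pointwise a positive \<open>inf\<^sub>k \<parallel>X - Z\<^sub>k\<parallel>\<^sub>G\<close> is attained, and where the infimum is \<open>0\<close> the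
  \<open>Z\<^sub>k\<close> converge to \<open>X\<close> (completeness of \<open>\<bbbK>\<close>). This selects a \<open>G\<close>-measurable \<open>Y\<close>
  below every \<open>\<parallel>X - Z\<^sub>k\<parallel>\<^sub>G\<close>, and pasting \<open>Y\<close> with any competitor shows that this
  integral minimiser is pointwise minimal.\<close>

section \<open>Local fields\<close>

locale local_field =
  fixes nabs :: "'k::{field,metric_space} \<Rightarrow> real"
  assumes local_field: "local_field_abs nabs"
begin

lemma nabs_nonneg [simp]: "0 \<le> nabs x"
  and nabs_eq_0_iff [simp]: "nabs x = 0 \<longleftrightarrow> x = 0"
  and nabs_mult: "nabs (x * y) = nabs x * nabs y"
  and nabs_add_le_max: "nabs (x + y) \<le> max (nabs x) (nabs y)"
  and dist_nabs: "dist x y = nabs (x - y)"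
  and nabs_nontrivial: "\<exists>x::'k. nabs x \<noteq> 0 \<and> nabs x \<noteq> 1"
  and locally_compact_cball: "\<exists>r>0. compact (cball x r)"
  using local_field unfolding local_field_abs_def by blast+

lemma nabs_0 [simp]: "nabs 0 = 0"
  by simp

lemma nabs_1 [simp]: "nabs 1 = 1"
  using nabs_mult[of 1 1] by simp

lemma nabs_minus [simp]: "nabs (- x) = nabs x"
proof -
  have "nabs (- 1) * nabs (- 1) = 1"
    using nabs_mult[of "- 1" "- 1"] by simp
  then have "nabs (- 1) = 1"
    using nabs_nonneg[of "- 1"] by (metis abs_of_nonneg abs_mult_self_eq real_sqrt_abs2 real_sqrt_one)
  then show ?thesis
    using nabs_mult[of "- 1" x] by simp
qed

lemma nabs_minus_commute: "nabs (x - y) = nabs (y - x)"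
  by (metis minus_diff_eq nabs_minus)

lemma nabs_diff_le_max: "nabs (x - y) \<le> max (nabs x) (nabs y)"
  using nabs_add_le_max[of x "- y"] by simp

lemma nabs_eq_if_nabs_diff_less:
  assumes "nabs (x - y) < nabs x"
  shows "nabs y = nabs x"
proof -
  have "nabs y \<le> max (nabs x) (nabs (x - y))"
    using nabs_diff_le_max[of x "x - y"] by simp
  moreover have "nabs x \<le> max (nabs y) (nabs (x - y))"
    using nabs_add_le_max[of y "x - y"] by simp
  ultimately show ?thesis
    using assms by (auto simp: max_def split: if_splits)
qed

lemma nabs_inverse: "nabs (inverse x) = inverse (nabs x)"
  by (metis inverse_unique nabs_1 nabs_eq_0_iff nabs_mult right_inverse inverse_zero)

lemma nabs_divide: "nabs (x / y) = nabs x / nabs y"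
  by (simp add: divide_inverse nabs_mult nabs_inverse)

lemma nabs_power: "nabs (x ^ n) = nabs x ^ n"
  by (induction n) (simp_all add: nabs_mult)

lemma ex_nabs_gt_1: "\<exists>x. 1 < nabs x"
proof -
  obtain x where x: "nabs x \<noteq> 0" "nabs x \<noteq> 1"
    using nabs_nontrivial by blast
  show ?thesis
  proof (cases "1 < nabs x")
    case False
    with x have "1 < nabs (inverse x)"
      by (simp add: nabs_inverse one_less_inverse_iff order_le_neq_trans)
    then show ?thesis ..
  qed blast
qed

text \<open>Multiplication by a power of an element with \<open>nabs c > 1\<close> blows up a compact
  ball around \<open>0\<close> to cover any given ball.\<close>
lemma compact_cball_0: "compact (cball (0::'k) R)"
proof -
  obtain r where r: "0 < r" "compact (cball (0::'k) r)"
    using locally_compact_cball by blast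
  obtain a :: 'k where a: "1 < nabs a"
    using ex_nabs_gt_1 by blast
  obtain n where n: "R / r < nabs a ^ n"
    using real_arch_pow[OF a] by blast
  define c where "c = a ^ n"
  have c: "0 < nabs c" "R \<le> nabs c * r"
    using a n r(1) by (simp_all add: c_def nabs_power pos_divide_less_eq)
  have "(nabs c)-lipschitz_on UNIV (\<lambda>x. c * x)"
    by (rule lipschitz_onI) (simp_all add: dist_nabs nabs_mult right_diff_distrib[symmetric])
  then have "compact ((\<lambda>x. c * x) ` cball 0 r)"
    using r(2) by (intro compact_continuous_image lipschitz_on_continuous_on) (auto intro: lipschitz_on_subset)
  moreover have "cball 0 R \<subseteq> (\<lambda>x. c * x) ` cball 0 r"
  proof
    fix y :: 'k
    assume "y \<in> cball 0 R"
    then have "nabs (inverse c * y) \<le> r"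
      using c by (simp add: dist_nabs nabs_divide field_simps)
    moreover have "c \<noteq> 0"
      using c(1) by auto
    then have "y = c * (inverse c * y)"
      by simp
    ultimately show "y \<in> (\<lambda>x. c * x) ` cball 0 r"
      by (force simp: dist_nabs)
  qed
  ultimately show ?thesis
    by (metis compact_Int_closed closed_cball inf.absorb_iff2)
qed

lemma Cauchy_convergent:
  fixes f :: "nat \<Rightarrow> 'k"
  assumes "Cauchy f"
  shows "convergent f"
proof -
  obtain R where "range f \<subseteq> cball 0 R"
    using cauchy_imp_bounded[OF assms] unfolding bounded_any_center[where a = 0] by (auto simp: subset_eq)
  moreover have "Topological_Spaces.complete (cball (0::'k) R)"
    by (rule compact_imp_complete[OF compact_cball_0])
  ultimately show ?thesis
    using assms unfolding complete_def convergent_def by blast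
qed

lemma ex_countable_dense: "\<exists>D::'k set. countable D \<and> (\<forall>x e. 0 < e \<longrightarrow> (\<exists>d\<in>D. dist x d < e))"
proof -
  have "\<exists>K. finite K \<and> cball (0::'k) (real n) \<subseteq> (\<Union>x\<in>K. ball x (inverse (real (Suc j))))" for n j
    using compact_cball_0 unfolding compact_eq_totally_bounded by simp
  then obtain K where K: "\<And>n j. finite (K n j)"
    "\<And>n j. cball (0::'k) (real n) \<subseteq> (\<Union>x\<in>K n j. ball x (inverse (real (Suc j))))"
    by metis
  have "\<exists>d\<in>(\<Union>n j. K n j). dist x d < e" if "0 < e" for x e
  proof -
    obtain n :: nat where "dist 0 x \<le> real n"
      using real_arch_simple by blast
    moreover obtain j where "inverse (real (Suc j)) < e"
      using \<open>0 < e\<close> reals_Archimedean by blast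
    ultimately show ?thesis
      using K(2)[of n j] by (force simp: dist_commute)
  qed
  moreover have "countable (\<Union>n j. K n j)"
    using K(1) by (simp add: countable_finite)
  ultimately show ?thesis
    by blast
qed

text \<open>\<open>'k\<close> is not assumed second countable, so the library's \<open>borel_measurable_dist\<close>
  does not apply; instead \<open>dist\<close> is written as an infimum over a countable dense set.\<close>
lemma measurable_dist [measurable (raw)]:
  assumes [measurable]: "f \<in> borel_measurable N" "g \<in> borel_measurable N"
  shows "(\<lambda>w. dist (f w) (g w :: 'k)) \<in> borel_measurable N"
proof -
  obtain D :: "'k set" where D: "countable D" "\<And>x e. 0 < e \<Longrightarrow> \<exists>d\<in>D. dist x d < e"
    using ex_countable_dense by blast
  have dist_eq_INF: "dist x y = (INF d\<in>D. dist x d + dist d y)" for x y :: 'k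
  proof (rule antisym)
    have "D \<noteq> {}"
      using D(2)[of 1 x] by auto
    then show "dist x y \<le> (INF d\<in>D. dist x d + dist d y)"
      by (intro cINF_greatest) (auto intro: dist_triangle)
    show "(INF d\<in>D. dist x d + dist d y) \<le> dist x y"
    proof (rule field_le_epsilon)
      fix e :: real
      assume "0 < e"
      then obtain d where d: "d \<in> D" "dist y d < e / 2"
        using D(2)[of "e / 2"] by auto
      have "(INF d\<in>D. dist x d + dist d y) \<le> dist x d + dist d y"
        using d(1) by (intro cINF_lower bdd_belowI[of _ 0]) auto
      also have "\<dots> \<le> dist x y + e"
        using d(2) dist_triangle[of x d y] by (simp add: dist_commute)
      finally show "(INF d\<in>D. dist x d + dist d y) \<le> dist x y + e" .
    qed
  qed
  have [measurable]: "(\<lambda>x. dist x d) \<in> borel_measurable borel" "(\<lambda>x. dist d x) \<in> borel_measurable borel"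
    for d :: 'k
    by (intro borel_measurable_continuous_onI continuous_intros)+
  have "(\<lambda>w. INF d\<in>D. dist (f w) d + dist d (g w)) \<in> borel_measurable N"
    using D(1) by measurable
  then show ?thesis
    by (simp only: dist_eq_INF[symmetric])
qed

lemma measurable_nabs_diff:
  assumes "f \<in> borel_measurable N" "g \<in> borel_measurable N"
  shows "(\<lambda>w. nabs (f w - g w :: 'k)) \<in> borel_measurable N"
  using measurable_dist[OF assms] by (simp add: dist_nabs)

lemma borel_measurable_lim_if_Cauchy:
  fixes f :: "nat \<Rightarrow> 'w \<Rightarrow> 'k"
  assumes [measurable]: "\<And>j. f j \<in> borel_measurable N" "g \<in> borel_measurable N"
  shows "(\<lambda>w. if Cauchy (\<lambda>j. f j w) then lim (\<lambda>j. f j w) else g w) \<in> borel_measurable N"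
proof (rule borel_measurable_LIMSEQ_metric)
  have [measurable]: "{w \<in> space N. Cauchy (\<lambda>j. f j w)} \<in> sets N"
    unfolding metric_Cauchy_iff2 by measurable
  show "(\<lambda>w. if Cauchy (\<lambda>j. f j w) then f j w else g w) \<in> borel_measurable N" for j
    by measurable
  show "(\<lambda>j. if Cauchy (\<lambda>j. f j w) then f j w else g w) \<longlonglongrightarrow>
      (if Cauchy (\<lambda>j. f j w) then lim (\<lambda>j. f j w) else g w)" for w
    using Cauchy_convergent by (simp add: convergent_LIMSEQ_iff)
qed

lemma zero_in_range_nabs: "0 \<in> range nabs"
  using nabs_0 by (metis rangeI)

lemma range_nabs_nonneg: "v \<in> range nabs \<Longrightarrow> 0 \<le> v"
  by auto

text \<open>A point \<open>x\<close> with \<open>c \<le> nabs x\<close> in a ball of radius \<open>c\<close> has the absolute value of the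
  centre, so a finite \<open>c\<close>-net of \<open>cball 0 d\<close> realises all these values.\<close>
lemma finite_nabs_values_between:
  assumes "0 < c"
  shows "finite {v \<in> range nabs. c \<le> v \<and> v \<le> d}"
proof -
  obtain K :: "'k set" where K: "finite K" "cball 0 d \<subseteq> (\<Union>y\<in>K. ball y c)"
    using compact_cball_0[of d] assms unfolding compact_eq_totally_bounded by blast
  have "{v \<in> range nabs. c \<le> v \<and> v \<le> d} \<subseteq> nabs ` K"
  proof clarify
    fix x
    assume x: "c \<le> nabs x" "nabs x \<le> d"
    then have "x \<in> cball 0 d"
      by (simp add: dist_nabs)
    then obtain y where "y \<in> K" "dist y x < c"
      using K(2) by auto
    then have "nabs (x - y) < nabs x"
      using x by (simp add: dist_nabs nabs_minus_commute)
    then show "nabs x \<in> nabs ` K"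
      using \<open>y \<in> K\<close> nabs_eq_if_nabs_diff_less by (metis image_eqI)
  qed
  then show ?thesis
    using K(1) finite_subset by blast
qed

lemma cInf_nabs_values_mem:
  assumes V: "V \<subseteq> range nabs" "V \<noteq> {}" and pos: "0 < Inf V"
  shows "Inf V \<in> V"
proof -
  have bdd: "bdd_below V"
    using V(1) by (intro bdd_belowI[of _ 0]) auto
  define F where "F = {v \<in> V. Inf V \<le> v \<and> v \<le> Inf V + 1}"
  have fin: "finite F"
    by (rule finite_subset[OF _ finite_nabs_values_between[OF pos]]) (use V(1) in \<open>auto simp: F_def\<close>)
  obtain v0 where "v0 \<in> V" "v0 < Inf V + 1"
    using cInf_lessD[OF V(2), of "Inf V + 1"] by auto
  then have "v0 \<in> F"
    using bdd by (auto simp: F_def intro: cInf_lower)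
  then have F: "F \<noteq> {}" "Min F \<in> V"
    using Min_in[OF fin] by (auto simp: F_def)
  have "Min F \<le> v" if "v \<in> V" for v
  proof (cases "v \<le> Inf V + 1")
    case True
    then show ?thesis
      using that fin bdd by (auto simp: F_def intro: Min_le cInf_lower)
  next
    case False
    then show ?thesis
      using Min_le[OF fin \<open>v0 \<in> F\<close>] \<open>v0 < Inf V + 1\<close> by linarith
  qed
  then have "Inf V = Min F"
    using F(2) V(2) bdd by (intro antisym cInf_lower cInf_greatest) auto
  then show ?thesis
    using F(2) by simp
qed

lemma cSup_nabs_values_mem:
  assumes V: "V \<subseteq> range nabs" "bdd_above V" "0 \<in> V"
  shows "Sup V \<in> V"
proof (cases "\<exists>v\<in>V. 0 < v")
  case True
  then obtain v0 where v0: "v0 \<in> V" "0 < v0"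
    by blast
  define F where "F = {v \<in> V. v0 \<le> v \<and> v \<le> Sup V}"
  have fin: "finite F"
    by (rule finite_subset[OF _ finite_nabs_values_between[OF v0(2)]]) (use V(1) in \<open>auto simp: F_def\<close>)
  have "v0 \<in> F"
    using v0 V(2) by (auto simp: F_def intro: cSup_upper)
  then have F: "F \<noteq> {}" "Max F \<in> V"
    using Max_in[OF fin] by (auto simp: F_def)
  have "v \<le> Max F" if "v \<in> V" for v
  proof (cases "v0 \<le> v")
    case True
    then show ?thesis
      using that fin V(2) by (auto simp: F_def intro: Max_ge cSup_upper)
  next
    case False
    then show ?thesis
      using Max_ge[OF fin \<open>v0 \<in> F\<close>] by linarith
  qed
  then have "Sup V = Max F"
    using F(2) by (intro cSup_eq_maximum) auto
  then show ?thesis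
    using F(2) by simp
next
  case False
  then have "Sup V = 0"
    using V(3) by (intro cSup_eq_maximum) (auto simp: not_less)
  then show ?thesis
    using V(3) by simp
qed

definition nabs_floor :: "real \<Rightarrow> real" where
  "nabs_floor t = Sup {v \<in> range nabs. v \<le> max t 0}"

lemma nabs_floor_set:
  shows "{v \<in> range nabs. v \<le> max t 0} \<subseteq> range nabs"
    and "bdd_above {v \<in> range nabs. v \<le> max t 0}"
    and "0 \<in> {v \<in> range nabs. v \<le> max t 0}"
    and "{v \<in> range nabs. v \<le> max t 0} \<noteq> {}"
proof -
  show "0 \<in> {v \<in> range nabs. v \<le> max t 0}"
    using zero_in_range_nabs by simp
  then show "{v \<in> range nabs. v \<le> max t 0} \<noteq> {}"
    by blast
qed (auto intro: bdd_aboveI[of _ "max t 0"])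

lemma nabs_floor_in_range: "nabs_floor t \<in> range nabs"
  using cSup_nabs_values_mem[OF nabs_floor_set(1-3)] unfolding nabs_floor_def by blast

lemma nabs_floor_le: "nabs_floor t \<le> max t 0"
  unfolding nabs_floor_def by (rule cSup_least[OF nabs_floor_set(4)]) auto

lemma nabs_floor_greatest: "v \<in> range nabs \<Longrightarrow> v \<le> t \<Longrightarrow> v \<le> nabs_floor t"
  unfolding nabs_floor_def using nabs_floor_set by (intro cSup_upper) auto

lemma mono_nabs_floor: "mono nabs_floor"
  unfolding nabs_floor_def mono_def
  by (intro allI impI cSup_subset_mono nabs_floor_set(2,4)) auto

lemma INF_nabs_values_attained:
  fixes r :: "nat \<Rightarrow> real"
  assumes "\<And>k. r k \<in> range nabs" "0 < (INF k. r k)"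
  shows "r (LEAST k. r k = (INF k. r k)) = (INF k. r k)"
proof -
  have "Inf (range r) \<in> range r"
    using assms by (intro cInf_nabs_values_mem) auto
  then obtain k0 where "r k0 = (INF k. r k)"
    by auto
  then show ?thesis
    by (rule LeastI[where P = "\<lambda>k. r k = (INF k. r k)"])
qed

lemma INF_nabs_values_le:
  fixes r :: "nat \<Rightarrow> real"
  assumes "\<And>k. r k \<in> range nabs"
  shows "(INF k. r k) \<le> r k"
proof (rule cINF_lower)
  have "0 \<le> r k" for k
    using range_nabs_nonneg[OF assms] .
  then show "bdd_below (range r)"
    by (intro bdd_belowI[of _ 0]) auto
qed simp

definition approx_INF :: "(nat \<Rightarrow> 'k) \<Rightarrow> (nat \<Rightarrow> real) \<Rightarrow> 'k" where
  "approx_INF z r =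
     (let m = (INF k. r k); y = (\<lambda>j. z (LEAST k. r k < m + inverse (real (Suc j))))
      in if Cauchy y then lim y else z (LEAST k. r k = m))"

lemma dist_LEAST_INF_le:
  fixes r :: "nat \<Rightarrow> real"
  assumes z_close: "\<And>k. nabs (x - z k) \<le> r k" and in_range: "\<And>k. r k \<in> range nabs"
    and e: "0 < e"
  shows "dist (z (LEAST k. r k < (INF k. r k) + e)) x \<le> (INF k. r k) + e"
proof -
  have "bdd_below (range r)"
    using range_nabs_nonneg[OF in_range] by (intro bdd_belowI[of _ 0]) auto
  then have "\<exists>k. r k < (INF k. r k) + e"
    using cINF_less_iff[OF UNIV_not_empty, of r "(INF k. r k) + e"] e by simp
  then have "r (LEAST k. r k < (INF k. r k) + e) < (INF k. r k) + e"
    by (rule LeastI_ex)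
  then have "nabs (x - z (LEAST k. r k < (INF k. r k) + e)) \<le> (INF k. r k) + e"
    using z_close[of "LEAST k. r k < (INF k. r k) + e"] by linarith
  then show ?thesis
    by (simp add: dist_nabs nabs_minus_commute[of _ x])
qed

text \<open>If the approximating points do not form a Cauchy sequence, the infimum is positive
  and hence, the values being discrete, attained.\<close>
lemma nabs_diff_approx_INF_le:
  assumes z_close: "\<And>k. nabs (x - z k) \<le> r k" and in_range: "\<And>k. r k \<in> range nabs"
  shows "nabs (x - approx_INF z r) \<le> (INF k. r k)"
proof -
  define m where "m = (INF k. r k)"
  define y where "y j = z (LEAST k. r k < m + inverse (real (Suc j)))" for j
  have approx: "approx_INF z r = (if Cauchy y then lim y else z (LEAST k. r k = m))"
    by (simp only: approx_INF_def Let_def m_def y_def[abs_def])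
  have y_close: "dist (y j) x \<le> m + inverse (real (Suc j))" for j
    unfolding y_def m_def using z_close in_range by (rule dist_LEAST_INF_le) simp
  show ?thesis
  proof (cases "Cauchy y")
    case True
    then obtain l where l: "y \<longlonglongrightarrow> l"
      using Cauchy_convergent convergent_def by blast
    have "(\<lambda>j. m + inverse (real (Suc j))) \<longlonglongrightarrow> m"
      using tendsto_add[OF tendsto_const LIMSEQ_inverse_real_of_nat] by simp
    then have "dist l x \<le> m"
      using y_close by (intro LIMSEQ_le[OF tendsto_dist[OF l tendsto_const]]) auto
    then show ?thesis
      using l True by (simp add: approx limI dist_nabs nabs_minus_commute[of _ x] m_def)
  next
    case False
    have "m \<noteq> 0"
    proof
      assume "m = 0"
      then have "dist (y j) x \<le> inverse (real (Suc j))" for j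
        using y_close[of j] by simp
      then have "(\<lambda>j. dist (y j) x) \<longlonglongrightarrow> 0"
        by (intro real_tendsto_sandwich[OF _ _ tendsto_const LIMSEQ_inverse_real_of_nat]) simp_all
      then have "y \<longlonglongrightarrow> x"
        by (rule tendsto_dist_iff[THEN iffD2])
      with False show False
        using LIMSEQ_imp_Cauchy by blast
    qed
    moreover have "0 \<le> m"
      unfolding m_def using range_nabs_nonneg[OF in_range] by (intro cINF_greatest) auto
    ultimately have "r (LEAST k. r k = m) = m"
      unfolding m_def using in_range by (intro INF_nabs_values_attained) auto
    then have "nabs (x - z (LEAST k. r k = m)) \<le> m"
      using z_close[of "LEAST k. r k = m"] by simp
    then show ?thesis
      using False by (simp add: approx m_def)
  qed
qed

lemma borel_measurable_approx_INF [measurable (raw)]: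
  assumes [measurable]: "\<And>k. z k \<in> borel_measurable N" "\<And>k. r k \<in> borel_measurable N"
  shows "(\<lambda>w. approx_INF (\<lambda>k. z k w) (\<lambda>k. r k w)) \<in> borel_measurable N"
proof -
  define kj where "kj j w = (LEAST k. r k w < (INF k. r k w) + inverse (real (Suc j)))" for j w
  define k0 where "k0 w = (LEAST k. r k w = (INF k. r k w))" for w
  have [measurable]: "(\<lambda>w. INF k. r k w) \<in> borel_measurable N"
    by measurable
  have "Measurable.pred N (\<lambda>w. r k w < (INF k. r k w) + c)" for k c
    by measurable
  then have "kj j \<in> measurable N (count_space UNIV)" for j
    unfolding kj_def by (rule measurable_Least)
  then have f: "(\<lambda>w. z (kj j w) w) \<in> borel_measurable N" for j
    by (rule measurable_compose_countable[OF assms(1)])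
  have "Measurable.pred N (\<lambda>w. r k w = (INF k. r k w))" for k
    by measurable
  then have "k0 \<in> measurable N (count_space UNIV)"
    unfolding k0_def by (rule measurable_Least)
  then have g: "(\<lambda>w. z (k0 w) w) \<in> borel_measurable N"
    by (rule measurable_compose_countable[OF assms(1)])
  have "(\<lambda>w. approx_INF (\<lambda>k. z k w) (\<lambda>k. r k w)) =
      (\<lambda>w. if Cauchy (\<lambda>j. z (kj j w) w) then lim (\<lambda>j. z (kj j w) w) else z (k0 w) w)"
    by (simp only: approx_INF_def kj_def k0_def Let_def)
  also have "\<dots> \<in> borel_measurable N"
    by (rule borel_measurable_lim_if_Cauchy[OF f g])
  finally show ?thesis .
qed

end

section \<open>Conditional essential supremum\<close>

lemma powr_inverse_le_iff_le_power:
  fixes x a :: real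
  assumes "0 \<le> x" "0 \<le> a" "1 \<le> p"
  shows "x powr (1 / real p) \<le> a \<longleftrightarrow> x \<le> a ^ p"
proof -
  have "(x powr (1 / real p)) ^ p = (x powr (1 / real p)) powr (real p)"
    using powr_realpow'[of "x powr (1 / real p)" p] assms by simp
  also have "\<dots> = x"
    using assms by (simp add: powr_powr)
  finally have root: "(x powr (1 / real p)) ^ p = x" .
  show ?thesis
  proof
    assume "x powr (1 / real p) \<le> a"
    then show "x \<le> a ^ p"
      using power_mono[of _ a p] root by fastforce
  next
    assume "x \<le> a ^ p"
    then show "x powr (1 / real p) \<le> a"
      using power_le_imp_le_base[of "x powr (1 / real p)" "p - 1" a] root assms by simp
  qed
qed

lemma le_if_no_rat_pair_between:
  fixes s n :: real
  assumes "0 \<le> n" and no_pair: "\<And>a b :: rat. 0 < a \<Longrightarrow> a < b \<Longrightarrow> \<not> (n \<le> of_rat a \<and> of_rat b < s)"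
  shows "s \<le> n"
proof (rule ccontr)
  assume "\<not> s \<le> n"
  then obtain a' where a': "a' \<in> \<rat>" "n < a'" "a' < s"
    using Rats_dense_in_real[of n s] by auto
  then obtain b' where b': "b' \<in> \<rat>" "a' < b'" "b' < s"
    using Rats_dense_in_real[of a' s] by auto
  obtain a b where ab: "a' = of_rat a" "b' = of_rat b"
    using a'(1) b'(1) by (auto elim!: Rats_cases)
  have "0 < (of_rat a :: real)"
    using a' assms(1) ab by linarith
  moreover have "a < b"
    using a' b' by (simp add: ab of_rat_less)
  ultimately have "\<not> (n \<le> of_rat a \<and> of_rat b < s)"
    by (intro no_pair) simp_all
  then show False
    using a' b' ab by simp
qed

locale prob_subalgebra = prob_space M + finite_measure_subalgebra M G
  for M G :: "'w measure"
begin

lemma borel_measurable_subalg: "f \<in> borel_measurable G \<Longrightarrow> f \<in> borel_measurable M"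
  using measurable_from_subalg[OF subalg] .

lemma sets_subalg: "A \<in> sets G \<Longrightarrow> A \<in> sets M"
  using subalg by (auto simp: subalgebra_def)

lemma space_subalg: "space G = space M"
  using subalg by (simp add: subalgebra_def)

lemma borel_measurable_ess_sup_cond [measurable]: "ess_sup_cond M G S \<in> borel_measurable G"
proof -
  have "(\<lambda>w. - (INF p\<in>{1::nat..}. - (real_cond_exp M G (\<lambda>v. S v ^ p) w powr (1 / real p))))
      \<in> borel_measurable G"
    by measurable
  then show ?thesis
    by (simp add: ess_sup_cond_def Inf_real_def image_image)
qed

lemma borel_measurable_ess_sup_cond_M [measurable]: "ess_sup_cond M G S \<in> borel_measurable M"
  using borel_measurable_subalg[OF borel_measurable_ess_sup_cond] .

context
  fixes S :: "'w \<Rightarrow> real" and C :: real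
  assumes S_measurable [measurable]: "S \<in> borel_measurable M"
    and S_nonneg: "\<And>w. 0 \<le> S w"
    and S_bounded: "AE w in M. S w \<le> C"
begin

lemma integrable_power: "integrable M (\<lambda>w. S w ^ p)"
  using S_bounded
  by (intro integrable_const_bound[where B = "C ^ p"]) (auto elim!: eventually_mono simp: S_nonneg power_mono)

text \<open>The cut-off \<open>min W C\<close> makes the dominating function integrable; it costs nothing
  because \<open>S \<le> C\<close> anyway.\<close>
lemma AE_cond_moment_root_le:
  assumes [measurable]: "W \<in> borel_measurable G" and S_le: "AE w in M. S w \<le> W w"
  shows "AE w in M. \<forall>p\<ge>1. 0 \<le> real_cond_exp M G (\<lambda>v. S v ^ p) w \<and>
           real_cond_exp M G (\<lambda>v. S v ^ p) w powr (1 / real p) \<le> max 0 (min (W w) C)"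
proof -
  define V where "V w = max 0 (min (W w) C)" for w
  have V_G [measurable]: "V \<in> borel_measurable G"
    unfolding V_def by measurable
  have [measurable]: "V \<in> borel_measurable M"
    using borel_measurable_subalg[OF V_G] .
  have S_le_V: "AE w in M. S w \<le> V w"
    using S_le S_bounded by eventually_elim (auto simp: V_def S_nonneg)
  have "AE w in M. 1 \<le> p \<longrightarrow> 0 \<le> real_cond_exp M G (\<lambda>v. S v ^ p) w \<and>
      real_cond_exp M G (\<lambda>v. S v ^ p) w powr (1 / real p) \<le> V w" for p
  proof (cases "1 \<le> p")
    case True
    have V_pow: "integrable M (\<lambda>w. V w ^ p)"
    proof (rule integrable_const_bound[where B = "max 0 C ^ p"])
      show "AE w in M. norm (V w ^ p) \<le> max 0 C ^ p"
        by (intro AE_I2) (auto simp: V_def intro!: power_mono)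
    qed measurable
    have "AE w in M. S w ^ p \<le> V w ^ p"
      using S_le_V by eventually_elim (simp add: S_nonneg power_mono)
    then have "AE w in M. real_cond_exp M G (\<lambda>v. S v ^ p) w \<le> real_cond_exp M G (\<lambda>v. V v ^ p) w"
      by (rule real_cond_exp_mono[OF _ integrable_power V_pow])
    moreover have "AE w in M. real_cond_exp M G (\<lambda>v. V v ^ p) w = V w ^ p"
      by (rule real_cond_exp_F_meas[OF V_pow]) measurable
    moreover have "AE w in M. 0 \<le> real_cond_exp M G (\<lambda>v. S v ^ p) w"
      by (rule real_cond_exp_pos) (simp_all add: S_nonneg)
    ultimately show ?thesis
    proof eventually_elim
      case (elim w)
      then show ?case
        using powr_inverse_le_iff_le_power[OF _ _ True] by (simp add: V_def)
    qed
  qed simp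
  then have "AE w in M. \<forall>p. 1 \<le> p \<longrightarrow> 0 \<le> real_cond_exp M G (\<lambda>v. S v ^ p) w \<and>
      real_cond_exp M G (\<lambda>v. S v ^ p) w powr (1 / real p) \<le> V w"
    by (simp only: AE_all_countable) blast
  then show ?thesis
    by (simp add: V_def)
qed

lemma AE_ess_sup_cond_le:
  assumes "W \<in> borel_measurable G" and S_le: "AE w in M. S w \<le> W w"
  shows "AE w in M. ess_sup_cond M G S w \<le> W w"
  using AE_cond_moment_root_le[OF assms] S_le
proof eventually_elim
  case (elim w)
  have "ess_sup_cond M G S w \<le> max 0 (min (W w) C)"
    unfolding ess_sup_cond_def using elim(1) by (intro cSUP_least) auto
  also have "\<dots> \<le> W w"
    using elim(2) S_nonneg[of w] by simp
  finally show ?case .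
qed

lemma AE_cond_moment_root_le_ess_sup_cond:
  "AE w in M. \<forall>p\<ge>1. 0 \<le> real_cond_exp M G (\<lambda>v. S v ^ p) w \<and>
     real_cond_exp M G (\<lambda>v. S v ^ p) w powr (1 / real p) \<le> ess_sup_cond M G S w"
  using AE_cond_moment_root_le[OF borel_measurable_const S_bounded]
proof eventually_elim
  case (elim w)
  then have "bdd_above ((\<lambda>p. real_cond_exp M G (\<lambda>v. S v ^ p) w powr (1 / real p)) ` {1..})"
    by (intro bdd_aboveI2[of _ _ "max 0 (min C C)"]) auto
  then show ?case
    using elim unfolding ess_sup_cond_def by (auto intro: cSUP_upper)
qed

text \<open>On the \<open>G\<close>-measurable event \<open>ess_sup_cond M G S \<le> a\<close> the \<open>p\<close>-th moment of \<open>S\<close> is at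
  most \<open>a ^ p\<close>; then apply Markov's inequality.\<close>
lemma measure_ess_sup_cond_le_less_le_power:
  assumes ab: "0 < a" "a < b" and p: "1 \<le> p"
  shows "measure M {w \<in> space M. ess_sup_cond M G S w \<le> a \<and> b < S w} \<le> (a / b) ^ p"
proof -
  let ?N = "ess_sup_cond M G S" and ?E = "real_cond_exp M G (\<lambda>v. S v ^ p)"
  define B where "B = {w \<in> space M. ?N w \<le> a}"
  have [measurable]: "B \<in> sets G"
    unfolding B_def space_subalg[symmetric] by measurable
  then have [measurable]: "B \<in> sets M"
    by (rule sets_subalg)
  have int: "integrable M (\<lambda>w. indicator B w * S w ^ p)"
    using integrable_mult_indicator[OF _ integrable_power] by simp
  have "(\<integral>w. indicator B w * S w ^ p \<partial>M) = (\<integral>w. indicator B w * ?E w \<partial>M)"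
    using real_cond_exp_intg(2)[OF int] by simp
  also have "\<dots> \<le> (\<integral>w. indicator B w * a ^ p \<partial>M)"
  proof (rule integral_mono_AE)
    show "integrable M (\<lambda>w. indicator B w * ?E w)"
      using real_cond_exp_intg(1)[OF int] by simp
    show "integrable M (\<lambda>w. indicator B w * a ^ p)"
      using integrable_mult_indicator[OF \<open>B \<in> sets M\<close> integrable_const[of "a ^ p"]] by simp
    show "AE w in M. indicator B w * ?E w \<le> indicator B w * a ^ p"
      using AE_cond_moment_root_le_ess_sup_cond
    proof eventually_elim
      case (elim w)
      then have "w \<in> B \<Longrightarrow> ?E w \<le> a ^ p"
        using p ab powr_inverse_le_iff_le_power[of "?E w" a p] by (auto simp: B_def)
      then show ?case
        by (simp add: indicator_def)
    qed
  qed
  also have "\<dots> \<le> a ^ p"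
    using ab by (simp add: mult_left_le_one_le)
  finally have int_le: "(\<integral>w. indicator B w * S w ^ p \<partial>M) \<le> a ^ p" .
  have "{w \<in> space M. ?N w \<le> a \<and> b < S w} \<subseteq> {w \<in> space M. b ^ p \<le> indicator B w * S w ^ p}"
    using ab by (auto simp: B_def intro!: power_mono)
  then have "measure M {w \<in> space M. ?N w \<le> a \<and> b < S w}
      \<le> measure M {w \<in> space M. b ^ p \<le> indicator B w * S w ^ p}"
    by (rule finite_measure_mono) measurable
  also have "\<dots> \<le> (\<integral>w. indicator B w * S w ^ p \<partial>M) / b ^ p"
    using ab int by (intro integral_Markov_inequality_measure[where A = "{}"]) (auto simp: S_nonneg)
  also have "\<dots> \<le> (a / b) ^ p"
    using ab int_le by (simp add: power_divide divide_right_mono)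
  finally show ?thesis .
qed

lemma AE_not_ess_sup_cond_le_less:
  assumes ab: "0 < a" "a < b"
  shows "AE w in M. \<not> (ess_sup_cond M G S w \<le> a \<and> b < S w)"
proof -
  define A where "A = {w \<in> space M. ess_sup_cond M G S w \<le> a \<and> b < S w}"
  have [measurable]: "A \<in> sets M"
    unfolding A_def by measurable
  have "measure M A \<le> (a / b) ^ p" if "1 \<le> p" for p
    unfolding A_def using ab that by (rule measure_ess_sup_cond_le_less_le_power)
  moreover have "(\<lambda>p. (a / b) ^ p) \<longlonglongrightarrow> 0"
    using ab by (intro LIMSEQ_power_zero) simp
  ultimately have "measure M A \<le> 0"
    by (intro LIMSEQ_le_const[where a = "measure M A"]) auto
  then have "A \<in> null_sets M"
    by (auto simp: null_sets_def emeasure_eq_measure measure_le_0_iff)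
  then have "AE w in M. w \<notin> A"
    by (rule AE_not_in)
  then show ?thesis
    by (rule AE_mp) (rule AE_I2, auto simp: A_def)
qed

lemma AE_le_ess_sup_cond: "AE w in M. S w \<le> ess_sup_cond M G S w"
proof -
  let ?N = "ess_sup_cond M G S"
  have "\<forall>a b :: rat. AE w in M. 0 < a \<longrightarrow> a < b \<longrightarrow> \<not> (?N w \<le> of_rat a \<and> of_rat b < S w)"
    using AE_not_ess_sup_cond_le_less by (auto simp: of_rat_less elim: AE_mp)
  then have "AE w in M. \<forall>a b :: rat. 0 < a \<longrightarrow> a < b \<longrightarrow> \<not> (?N w \<le> of_rat a \<and> of_rat b < S w)"
    by (simp add: AE_all_countable)
  then show ?thesis
    using AE_cond_moment_root_le_ess_sup_cond
  proof eventually_elim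
    case (elim w)
    have "0 \<le> real_cond_exp M G (\<lambda>v. S v ^ 1) w powr (1 / real (1::nat))"
      by simp
    also have "\<dots> \<le> ?N w"
      using elim(2) by blast
    finally have "0 \<le> ?N w" .
    moreover have "\<not> (?N w \<le> of_rat a \<and> of_rat b < S w)" if "0 < a" "a < b" for a b :: rat
      using elim(1) that by blast
    ultimately show ?case
      by (rule le_if_no_rat_pair_between)
  qed
qed

end

end

section \<open>Non-archimedean conditional expectation\<close>

locale nonarch_subalgebra = local_field nabs + prob_subalgebra M G
  for nabs :: "'k::{field,metric_space} \<Rightarrow> real" and M G :: "'w measure"
begin

lemma borel_measurable_normG [measurable]: "normG M nabs G V \<in> borel_measurable G"
  unfolding normG_def by (rule borel_measurable_ess_sup_cond)

lemma borel_measurable_normG_M [measurable]: "normG M nabs G V \<in> borel_measurable M"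
  unfolding normG_def by (rule borel_measurable_ess_sup_cond_M)

lemma Linf_paste:
  assumes "Z1 \<in> Linf M nabs G" "Z2 \<in> Linf M nabs G" "A \<in> sets G"
  shows "(\<lambda>w. if w \<in> A then Z1 w else Z2 w) \<in> Linf M nabs G"
proof -
  obtain C1 C2 where "AE w in M. nabs (Z1 w) \<le> C1" "AE w in M. nabs (Z2 w) \<le> C2"
    using assms by (auto simp: Linf_def)
  then have "AE w in M. nabs (if w \<in> A then Z1 w else Z2 w) \<le> max C1 C2"
    by eventually_elim auto
  moreover have "(\<lambda>w. if w \<in> A then Z1 w else Z2 w) \<in> borel_measurable G"
    using assms by (intro measurable_If_set) (auto simp: Linf_def)
  ultimately show ?thesis
    unfolding Linf_def by blast
qed

context
  fixes X :: "'w \<Rightarrow> 'k"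
  assumes X: "X \<in> Linf M nabs M"
begin

abbreviation distG :: "('w \<Rightarrow> 'k) \<Rightarrow> 'w \<Rightarrow> real" where
  "distG Z \<equiv> normG M nabs G (\<lambda>v. X v - Z v)"

lemma nabs_diff_Linf:
  assumes Z: "Z \<in> Linf M nabs G"
  shows "(\<lambda>w. nabs (X w - Z w)) \<in> borel_measurable M"
    and "\<exists>C. AE w in M. nabs (X w - Z w) \<le> C"
proof -
  show "(\<lambda>w. nabs (X w - Z w)) \<in> borel_measurable M"
    using X Z by (intro measurable_nabs_diff) (auto simp: Linf_def borel_measurable_subalg)
  obtain CX CZ where "AE w in M. nabs (X w) \<le> CX" "AE w in M. nabs (Z w) \<le> CZ"
    using X Z by (auto simp: Linf_def)
  then have "AE w in M. nabs (X w - Z w) \<le> max CX CZ"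
    by eventually_elim (meson max.mono nabs_diff_le_max order_trans)
  then show "\<exists>C. AE w in M. nabs (X w - Z w) \<le> C" ..
qed

lemma AE_nabs_diff_le_distG:
  assumes "Z \<in> Linf M nabs G"
  shows "AE w in M. nabs (X w - Z w) \<le> distG Z w"
proof -
  obtain C where "AE w in M. nabs (X w - Z w) \<le> C"
    using nabs_diff_Linf(2)[OF assms] ..
  from AE_le_ess_sup_cond[OF nabs_diff_Linf(1)[OF assms] nabs_nonneg this] show ?thesis
    unfolding normG_def .
qed

lemma AE_distG_le:
  assumes "Z \<in> Linf M nabs G" "W \<in> borel_measurable G" "AE w in M. nabs (X w - Z w) \<le> W w"
  shows "AE w in M. distG Z w \<le> W w"
proof -
  obtain C where "AE w in M. nabs (X w - Z w) \<le> C"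
    using nabs_diff_Linf(2)[OF assms(1)] ..
  from AE_ess_sup_cond_le[OF nabs_diff_Linf(1)[OF assms(1)] nabs_nonneg this assms(2,3)] show ?thesis
    unfolding normG_def .
qed

lemma AE_distG_nonneg:
  assumes "Z \<in> Linf M nabs G"
  shows "AE w in M. 0 \<le> distG Z w"
  using AE_nabs_diff_le_distG[OF assms] by eventually_elim (rule order_trans[OF nabs_nonneg])

lemma integrable_distG:
  assumes Z: "Z \<in> Linf M nabs G"
  shows "integrable M (distG Z)"
proof -
  obtain C where C: "AE w in M. nabs (X w - Z w) \<le> C"
    using nabs_diff_Linf(2)[OF Z] by blast
  have "AE w in M. norm (distG Z w) \<le> C"
    using AE_distG_le[OF Z borel_measurable_const C] AE_distG_nonneg[OF Z] by eventually_elim simp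
  then show ?thesis
    by (intro integrable_const_bound[where B = C]) simp_all
qed

text \<open>\<open>nabs_floor\<close> of the conditional norm is still a \<open>G\<close>-measurable bound of
  \<open>nabs (X - Z)\<close>, so by minimality the conditional norm equals its \<open>nabs_floor\<close>.\<close>
lemma AE_distG_in_range_nabs:
  assumes Z: "Z \<in> Linf M nabs G"
  shows "AE w in M. distG Z w \<in> range nabs"
proof -
  have [measurable]: "(\<lambda>w. nabs_floor (distG Z w)) \<in> borel_measurable G"
    using measurable_compose[OF borel_measurable_normG borel_measurable_mono[OF mono_nabs_floor]] .
  have "AE w in M. nabs (X w - Z w) \<le> nabs_floor (distG Z w)"
    using AE_nabs_diff_le_distG[OF Z] by eventually_elim (simp add: nabs_floor_greatest)
  then have "AE w in M. distG Z w \<le> nabs_floor (distG Z w)"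
    by (rule AE_distG_le[OF Z, rotated]) measurable
  then show ?thesis
    using AE_distG_nonneg[OF Z]
  proof eventually_elim
    case (elim w)
    then have "distG Z w = nabs_floor (distG Z w)"
      using nabs_floor_le[of "distG Z w"] by simp
    then show ?case
      using nabs_floor_in_range by metis
  qed
qed

lemma AE_distG_paste_le:
  assumes "Z1 \<in> Linf M nabs G" "Z2 \<in> Linf M nabs G" "A \<in> sets G"
  shows "AE w in M. distG (\<lambda>w. if w \<in> A then Z1 w else Z2 w) w
           \<le> (if w \<in> A then distG Z1 w else distG Z2 w)"
proof (rule AE_distG_le[OF Linf_paste[OF assms]])
  show "(\<lambda>w. if w \<in> A then distG Z1 w else distG Z2 w) \<in> borel_measurable G"
    using assms(3) by (intro measurable_If_set) auto
  show "AE w in M. nabs (X w - (if w \<in> A then Z1 w else Z2 w))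
      \<le> (if w \<in> A then distG Z1 w else distG Z2 w)"
    using AE_nabs_diff_le_distG[OF assms(1)] AE_nabs_diff_le_distG[OF assms(2)] by eventually_elim auto
qed

lemma Linf_if_AE_nabs_diff_le:
  assumes "Y \<in> borel_measurable G" "AE w in M. nabs (X w - Y w) \<le> C"
  shows "Y \<in> Linf M nabs G"
proof -
  obtain CX where "AE w in M. nabs (X w) \<le> CX"
    using X by (auto simp: Linf_def)
  with assms(2) have "AE w in M. nabs (Y w) \<le> max CX C"
  proof eventually_elim
    case (elim w)
    have "nabs (Y w) \<le> max (nabs (X w)) (nabs (X w - Y w))"
      using nabs_diff_le_max[of "X w" "X w - Y w"] by simp
    then show ?case
      using max.mono[OF elim(2) elim(1)] by (rule order_trans)
  qed
  with assms(1) show ?thesis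
    by (auto simp: Linf_def)
qed

lemma ex_Linf_distG_le_all:
  assumes Zs: "\<And>k::nat. Zs k \<in> Linf M nabs G"
  shows "\<exists>Y\<in>Linf M nabs G. \<forall>k. AE w in M. distG Y w \<le> distG (Zs k) w"
proof -
  define r where "r k = distG (Zs k)" for k
  have [measurable]: "r k \<in> borel_measurable G" "Zs k \<in> borel_measurable G" for k
    using Zs by (auto simp: r_def Linf_def)
  define Y where "Y w = approx_INF (\<lambda>k. Zs k w) (\<lambda>k. r k w)" for w
  have [measurable]: "Y \<in> borel_measurable G"
    unfolding Y_def by measurable
  have good: "AE w in M. \<forall>k. nabs (X w - Zs k w) \<le> r k w \<and> r k w \<in> range nabs"
    unfolding r_def AE_all_countable
    using AE_conjI[OF AE_nabs_diff_le_distG[OF Zs] AE_distG_in_range_nabs[OF Zs]] by blast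
  have INF_le: "(INF k. r k w) \<le> r k w"
    if "\<forall>k. nabs (X w - Zs k w) \<le> r k w \<and> r k w \<in> range nabs" for w k
    using that by (intro INF_nabs_values_le) blast
  have Y_close: "AE w in M. nabs (X w - Y w) \<le> (INF k. r k w)"
    using good
  proof eventually_elim
    case (elim w)
    then show ?case
      unfolding Y_def by (intro nabs_diff_approx_INF_le) auto
  qed
  obtain C where "AE w in M. nabs (X w - Zs 0 w) \<le> C"
    using nabs_diff_Linf(2)[OF Zs] by blast
  then have "AE w in M. r 0 w \<le> C"
    unfolding r_def by (rule AE_distG_le[OF Zs borel_measurable_const])
  with Y_close good have "AE w in M. nabs (X w - Y w) \<le> C"
  proof eventually_elim
    case (elim w)
    then show ?case
      using INF_le[OF elim(2), of 0] by linarith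
  qed
  then have Y: "Y \<in> Linf M nabs G"
    by (rule Linf_if_AE_nabs_diff_le[rotated]) measurable
  have "AE w in M. distG Y w \<le> (INF k. r k w)"
    by (rule AE_distG_le[OF Y _ Y_close]) measurable
  with good have "AE w in M. distG Y w \<le> distG (Zs k) w" for k
  proof eventually_elim
    case (elim w)
    then show ?case
      using INF_le[OF elim(1), of k] by (simp add: r_def)
  qed
  with Y show ?thesis
    by blast
qed

lemma ex_integral_distG_minimizer:
  "\<exists>Y\<in>Linf M nabs G. \<forall>Z\<in>Linf M nabs G. (\<integral>w. distG Y w \<partial>M) \<le> (\<integral>w. distG Z w \<partial>M)"
proof -
  let ?L = "Linf M nabs G" and ?I = "\<lambda>Z. \<integral>w. distG Z w \<partial>M"
  define \<mu> where "\<mu> = (INF Z\<in>?L. ?I Z)"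
  have bdd: "bdd_below (?I ` ?L)"
    using AE_distG_nonneg by (intro bdd_belowI2[of _ 0] integral_nonneg_AE)
  have "(\<lambda>_. 0) \<in> ?L"
    by (auto simp: Linf_def)
  then have "\<exists>Z\<in>?L. ?I Z < \<mu> + inverse (real (Suc k))" for k
    using cINF_less_iff[OF _ bdd, of "\<mu> + inverse (real (Suc k))"] by (auto simp: \<mu>_def)
  then obtain Zs where Zs: "\<And>k. Zs k \<in> ?L" "\<And>k. ?I (Zs k) < \<mu> + inverse (real (Suc k))"
    by metis
  obtain Y where Y: "Y \<in> ?L" "\<And>k. AE w in M. distG Y w \<le> distG (Zs k) w"
    using ex_Linf_distG_le_all[where Zs = Zs] Zs(1) by blast
  have "?I Y \<le> \<mu> + inverse (real (Suc k))" for k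
    using integral_mono_AE[OF integrable_distG[OF Y(1)] integrable_distG[OF Zs(1)] Y(2)[of k]] Zs(2)[of k]
    by linarith
  moreover have "(\<lambda>k. \<mu> + inverse (real (Suc k))) \<longlonglongrightarrow> \<mu>"
    using tendsto_add[OF tendsto_const LIMSEQ_inverse_real_of_nat] by simp
  ultimately have "?I Y \<le> \<mu>"
    by (intro LIMSEQ_le_const[where a = "?I Y"]) auto
  moreover have "\<mu> \<le> ?I Z" if "Z \<in> ?L" for Z
    unfolding \<mu>_def using bdd that by (rule cINF_lower)
  ultimately show ?thesis
    using Y(1) by force
qed

text \<open>Pasting \<open>Z\<close> into \<open>Y\<close> where it is better lowers the conditional norm to
  \<open>min (distG Y) (distG Z)\<close>, so minimality of the integral forces \<open>distG Y \<le> distG Z\<close>.\<close>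
lemma AE_distG_le_if_integral_minimal:
  assumes Y: "Y \<in> Linf M nabs G"
    and min: "\<And>Z'. Z' \<in> Linf M nabs G \<Longrightarrow> (\<integral>w. distG Y w \<partial>M) \<le> (\<integral>w. distG Z' w \<partial>M)"
    and Z: "Z \<in> Linf M nabs G"
  shows "AE w in M. distG Y w \<le> distG Z w"
proof -
  define A where "A = {w \<in> space M. distG Z w < distG Y w}"
  have A: "A \<in> sets G"
    unfolding A_def space_subalg[symmetric] by measurable
  let ?P = "\<lambda>w. if w \<in> A then Z w else Y w"
  let ?m = "\<lambda>w. min (distG Y w) (distG Z w)"
  have int_m: "integrable M ?m"
    using integrable_distG[OF Y] integrable_distG[OF Z] by auto
  have A_iff: "w \<in> A \<longleftrightarrow> distG Z w < distG Y w" if "w \<in> space M" for w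
    using that by (simp add: A_def)
  have "AE w in M. distG ?P w \<le> ?m w"
    using AE_distG_paste_le[OF Z Y A] AE_space by eventually_elim (auto simp: A_iff split: if_splits)
  then have "(\<integral>w. distG ?P w \<partial>M) \<le> (\<integral>w. ?m w \<partial>M)"
    by (rule integral_mono_AE[OF integrable_distG[OF Linf_paste[OF Z Y A]] int_m])
  with min[OF Linf_paste[OF Z Y A]] have "(\<integral>w. distG Y w - ?m w \<partial>M) \<le> 0"
    using integrable_distG[OF Y] int_m by simp
  moreover have nonneg: "AE w in M. 0 \<le> distG Y w - ?m w"
    by simp
  ultimately have "(\<integral>w. distG Y w - ?m w \<partial>M) = 0"
    using integral_nonneg_AE[OF nonneg] by linarith
  moreover have "integrable M (\<lambda>w. distG Y w - ?m w)"
    using integrable_distG[OF Y] int_m by simp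
  ultimately have "AE w in M. distG Y w - ?m w = 0"
    using integral_nonneg_eq_0_iff_AE[OF _ nonneg] by simp
  then show ?thesis
    by eventually_elim simp
qed

lemma condE_nonempty: "condE M nabs X G \<noteq> {}"
  using ex_integral_distG_minimizer AE_distG_le_if_integral_minimal unfolding condE_def by blast

end

end

theorem mainTheorem13:
  fixes M G :: "'w measure" and nabs :: "'k::{field,metric_space} \<Rightarrow> real"
    and X Y :: "'w \<Rightarrow> 'k"
  assumes "local_field_abs nabs"
    and "prob_space M"
    and "subalgebra M G"
    and "X \<in> Linf M nabs M"
  shows "Y \<in> condE M nabs X G \<longleftrightarrow>
           (Y \<in> Linf M nabs G \<and> (AE w in M. nabs (X w - Y w) \<le> eps_cond M nabs X G w))"
proof -
  interpret nonarch_subalgebra nabs M G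
    using assms(1-3) by (intro nonarch_subalgebra.intro local_field.intro prob_subalgebra.intro
      finite_measure_subalgebra.intro finite_measure_subalgebra_axioms.intro prob_space.finite_measure)
  define Y0 where "Y0 = (SOME Y. Y \<in> condE M nabs X G)"
  have Y0: "Y0 \<in> condE M nabs X G"
    using condE_nonempty[OF assms(4)] unfolding Y0_def by (simp add: some_in_eq)
  have eps: "eps_cond M nabs X G = normG M nabs G (\<lambda>v. X v - Y0 v)"
    by (simp add: eps_cond_def Y0_def)
  show ?thesis
  proof
    assume "Y \<in> condE M nabs X G"
    then have Y: "Y \<in> Linf M nabs G"
      and "AE w in M. normG M nabs G (\<lambda>v. X v - Y v) w \<le> eps_cond M nabs X G w"
      using Y0 by (auto simp: condE_def eps)
    with AE_nabs_diff_le_distG[OF assms(4) Y]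
    show "Y \<in> Linf M nabs G \<and> (AE w in M. nabs (X w - Y w) \<le> eps_cond M nabs X G w)"
      by (auto elim: AE_mp)
  next
    assume "Y \<in> Linf M nabs G \<and> (AE w in M. nabs (X w - Y w) \<le> eps_cond M nabs X G w)"
    then have Y: "Y \<in> Linf M nabs G" and "AE w in M. nabs (X w - Y w) \<le> eps_cond M nabs X G w"
      by auto
    then have "AE w in M. normG M nabs G (\<lambda>v. X v - Y v) w \<le> eps_cond M nabs X G w"
      by (intro AE_distG_le[OF assms(4) Y]) (simp_all add: eps)
    with Y0 show "Y \<in> condE M nabs X G"
      using Y by (auto simp: condE_def eps elim: AE_mp)
  qed
qed

end
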